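(* Let $\operatorname{R}_3=\{a_0,a_1,a_2\}$ be the dihedral quandle of order $3$, with $a_ia_j=a_{2j-i \pmod 3}$. Then the set of non-zero maximal quandles in $\mathbb{Z}_2[\operatorname{R}_3]$ is $$\operatorname{mq}(\mathbb{Z}_2[\operatorname{R}_3])=\Big\{\{a_0+a_1+a_2\},~\operatorname{R}_3,~\{a_0+a_1,\,a_0+a_2,\,a_1+a_2\}\Big\},$$ and the quandle $\{a_0+a_1,\,a_0+a_2,\,a_1+a_2\}$ is isomorphic to $\operatorname{R}_3$.
   Context: A quandle is a non-empty set with a binary operation $(u,v)\mapsto uv$ such that $uu=u$; for all $u,v$ there is a unique $w$ with $u=wv$; and $(uv)w=(uw)(vw)$. For a quandle $Q$, the quandle ring $\mathbb{Z}_2[Q]$ is the $\mathbb{Z}_2$-vector space with basis $Q$, with multiplication $\big(\sum_i\alpha_i q_i\big)\big(\sum_j\beta_j q_j\big)=\sum_{i,j}\alpha_i\beta_j (q_iq_j)$. A quandle in $\mathbb{Z}_2[Q]$ is a subset closed under the ring multiplication which is a quandle under the restricted multiplication. $\operatorname{mq}(\mathbb{Z}_2[Q])$ is the set of all quandles in $\mathbb{Z}_2[Q]$ different from $\{0\}$ that are maximal with respect to inclusion among quandles in $\mathbb{Z}_2[Q]$. *)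

theory Defs
  imports Main
begin

definition is_quandle :: "'a set \<Rightarrow> ('a \<Rightarrow> 'a \<Rightarrow> 'a) \<Rightarrow> bool" where
  "is_quandle Q m \<longleftrightarrow> Q \<noteq> {}
     \<and> (\<forall>u\<in>Q. \<forall>v\<in>Q. m u v \<in> Q)
     \<and> (\<forall>u\<in>Q. m u u = u)
     \<and> (\<forall>u\<in>Q. \<forall>v\<in>Q. \<exists>!w. w \<in> Q \<and> u = m w v)
     \<and> (\<forall>u\<in>Q. \<forall>v\<in>Q. \<forall>w\<in>Q. m (m u v) w = m (m u w) (m v w))"

definition quandle_iso :: "'a set \<Rightarrow> ('a \<Rightarrow> 'a \<Rightarrow> 'a) \<Rightarrow> 'b set \<Rightarrow> ('b \<Rightarrow> 'b \<Rightarrow> 'b) \<Rightarrow> bool" where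
  "quandle_iso Q m P n \<longleftrightarrow>
     (\<exists>f. bij_betw f Q P \<and> (\<forall>u\<in>Q. \<forall>v\<in>Q. f (m u v) = n (f u) (f v)))"

text \<open>The quandle ring Z_2[Q]: an element is identified with its support, i.e. the finite
  set of basis elements q in Q with coefficient 1 (coefficients in Z_2). The zero element is
  the empty set; addition is symmetric difference.\<close>
definition qring :: "'a set \<Rightarrow> 'a set set" where
  "qring Q = {x. x \<subseteq> Q \<and> finite x}"

definition qmul :: "('a \<Rightarrow> 'a \<Rightarrow> 'a) \<Rightarrow> 'a set \<Rightarrow> 'a set \<Rightarrow> 'a set" where
  "qmul m x y = {q. odd (card {(u, v). u \<in> x \<and> v \<in> y \<and> m u v = q})}"

definition quandle_in :: "'a set \<Rightarrow> ('a \<Rightarrow> 'a \<Rightarrow> 'a) \<Rightarrow> 'a set set \<Rightarrow> bool" where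
  "quandle_in Q m X \<longleftrightarrow> X \<subseteq> qring Q \<and> is_quandle X (qmul m)"

definition mq :: "'a set \<Rightarrow> ('a \<Rightarrow> 'a \<Rightarrow> 'a) \<Rightarrow> 'a set set set" where
  "mq Q m = {X. quandle_in Q m X \<and> X \<noteq> {{}}
              \<and> (\<forall>Y. quandle_in Q m Y \<and> X \<subseteq> Y \<longrightarrow> Y = X)}"

text \<open>Dihedral quandle R_3 with a_i = i, carrier {0,1,2}, a_i a_j = a_{(2j - i) mod 3}.\<close>
definition R3 :: "nat set" where "R3 = {0, 1, 2}"

definition r3op :: "nat \<Rightarrow> nat \<Rightarrow> nat" where
  "r3op i j = nat ((2 * int j - int i) mod 3)"

end

theory Submission
  imports Defs
begin

text \<open>Elements of \<open>\<int>\<^sub>2[Q]\<close> are encoded by their supports, so the weight of an element is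
  its cardinality. Weight mod 2 is multiplicative, hence right division by an element of even
  weight only yields even weights. A quandle containing \<open>0\<close> is \<open>{0}\<close>, since \<open>x 0 = 0\<close>.
  As \<open>R\<^sub>3\<close> is latin, the sum \<open>s\<close> of the basis satisfies \<open>x s = |x| s\<close>, so a quandle
  containing \<open>s\<close> but not \<open>0\<close> is \<open>{s}\<close>. Any other quandle lies in weight 1 or in weight 2.
  These layers are quandles: weight 1 is the basis \<open>R\<^sub>3\<close>, and \<open>a\<^sub>i \<mapsto> s + a\<^sub>i\<close> maps
  \<open>R\<^sub>3\<close> isomorphically onto weight 2 because \<open>(s + a\<^sub>i)(s + a\<^sub>j) = s + s + s + a\<^sub>i a\<^sub>j\<close>.
  Hence the maximal non-zero quandles are the layers of weight 1, 2 and 3.\<close>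

lemma qmul_eq_fibres: "qmul m x y = {q. odd (card {p \<in> x \<times> y. case_prod m p = q})}"
proof -
  have "{(u, v). u \<in> x \<and> v \<in> y \<and> m u v = q} = {p \<in> x \<times> y. case_prod m p = q}" for q
    by auto
  then show ?thesis
    by (simp add: qmul_def)
qed

lemma qmul_empty_right [simp]: "qmul m x {} = {}"
  by (simp add: qmul_def)

lemma qmul_singleton [simp]: "qmul m {u} {v} = {m u v}"
proof -
  have "{p \<in> {u} \<times> {v}. case_prod m p = q} = (if q = m u v then {(u, v)} else {})" for q
    by auto
  then show ?thesis
    by (auto simp: qmul_eq_fibres)
qed

lemma odd_card_sym_diff:
  assumes "finite A" "finite B"
  shows "odd (card (sym_diff A B)) \<longleftrightarrow> odd (card A) \<noteq> odd (card B)"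
proof -
  have "card A = card (A - B) + card (A \<inter> B)" "card B = card (B - A) + card (A \<inter> B)"
    using assms card_mono[of A "A \<inter> B"] card_mono[of B "A \<inter> B"]
    by (auto simp: card_Diff_subset_Int Int_commute)
  moreover have "card (sym_diff A B) = card (A - B) + card (B - A)"
    using assms by (subst card_Un_disjoint) auto
  ultimately show ?thesis
    by auto
qed

lemma qmul_sym_diff_left:
  assumes "finite x" "finite x'" "finite y"
  shows "qmul m (sym_diff x x') y = sym_diff (qmul m x y) (qmul m x' y)"
proof -
  let ?F = "\<lambda>x q. {p \<in> x \<times> y. case_prod m p = q}"
  have "?F (sym_diff x x') q = sym_diff (?F x q) (?F x' q)" for q
    by auto
  moreover have "finite (?F x q)" "finite (?F x' q)" for q
    using assms by auto
  ultimately show ?thesis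
    by (auto simp: qmul_eq_fibres odd_card_sym_diff)
qed

lemma qmul_sym_diff_right:
  assumes "finite x" "finite y" "finite y'"
  shows "qmul m x (sym_diff y y') = sym_diff (qmul m x y) (qmul m x y')"
proof -
  let ?F = "\<lambda>y q. {p \<in> x \<times> y. case_prod m p = q}"
  have "?F (sym_diff y y') q = sym_diff (?F y q) (?F y' q)" for q
    by auto
  moreover have "finite (?F y q)" "finite (?F y' q)" for q
    using assms by auto
  ultimately show ?thesis
    by (auto simp: qmul_eq_fibres odd_card_sym_diff)
qed

lemma odd_card_qmul:
  assumes "finite x" "finite y"
  shows "odd (card (qmul m x y)) \<longleftrightarrow> odd (card x) \<and> odd (card y)"
proof -
  let ?h = "case_prod m" and ?P = "x \<times> y"
  let ?F = "\<lambda>q. card {p \<in> ?P. ?h p = q}"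
  have fin: "finite ?P"
    using assms by simp
  have card_P: "card ?P = (\<Sum>q\<in>?h ` ?P. ?F q)"
    using sum.image_gen[OF fin, of "\<lambda>_. 1::nat" ?h] by simp
  have "q \<in> ?h ` ?P" if "odd (?F q)" for q
    using odd_card_imp_not_empty[OF that] by blast
  then have qmul_eq: "qmul m x y = {q \<in> ?h ` ?P. odd (?F q)}"
    by (auto simp: qmul_eq_fibres)
  have "even (card ?P) \<longleftrightarrow> even (card (qmul m x y))"
    unfolding card_P qmul_eq using fin by (rule even_sum_iff[OF finite_imageI])
  then show ?thesis
    by (auto simp: card_cartesian_product)
qed

lemma is_quandleD:
  assumes "is_quandle Q m"
  shows quandle_nonempty: "Q \<noteq> {}"
    and quandle_closed: "u \<in> Q \<Longrightarrow> v \<in> Q \<Longrightarrow> m u v \<in> Q"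
    and quandle_idem: "u \<in> Q \<Longrightarrow> m u u = u"
    and quandle_right_div_unique: "u \<in> Q \<Longrightarrow> v \<in> Q \<Longrightarrow> \<exists>!w. w \<in> Q \<and> u = m w v"
    and quandle_distrib:
      "u \<in> Q \<Longrightarrow> v \<in> Q \<Longrightarrow> w \<in> Q \<Longrightarrow> m (m u v) w = m (m u w) (m v w)"
proof -
  show "Q \<noteq> {}"
    using assms by (simp add: is_quandle_def)
  show "m u v \<in> Q" if "u \<in> Q" "v \<in> Q" for u v
    using assms that by (simp add: is_quandle_def)
  show "m u u = u" if "u \<in> Q" for u
    using assms that by (simp add: is_quandle_def)
  show "\<exists>!w. w \<in> Q \<and> u = m w v" if "u \<in> Q" "v \<in> Q" for u v
    using assms that by (simp add: is_quandle_def)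
  have "\<forall>u\<in>Q. \<forall>v\<in>Q. \<forall>w\<in>Q. m (m u v) w = m (m u w) (m v w)"
    using assms unfolding is_quandle_def by (elim conjE)
  then show "m (m u v) w = m (m u w) (m v w)" if "u \<in> Q" "v \<in> Q" "w \<in> Q" for u v w
    using that by blast
qed

lemma quandle_right_div:
  assumes "is_quandle Q m" "u \<in> Q" "v \<in> Q"
  obtains w where "w \<in> Q" "u = m w v"
  using quandle_right_div_unique[OF assms] that by blast

lemma is_quandle_singleton: "m a a = a \<Longrightarrow> is_quandle {a} m"
  by (auto simp: is_quandle_def)

lemma quandle_hom_right_div_unique:
  assumes "is_quandle Q m" "inj_on f Q"
    and hom: "\<And>u v. u \<in> Q \<Longrightarrow> v \<in> Q \<Longrightarrow> f (m u v) = n (f u) (f v)"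
    and u: "u \<in> Q" and v: "v \<in> Q"
  shows "\<exists>!w. w \<in> f ` Q \<and> f u = n w (f v)"
proof -
  have uniq: "\<exists>!w. w \<in> Q \<and> u = m w v"
    using assms(1) u v by (rule quandle_right_div_unique)
  then obtain w where w: "w \<in> Q" "u = m w v"
    by blast
  have w_unique: "w' = w" if w': "w' \<in> Q" "f u = n (f w') (f v)" for w'
  proof -
    have "f u = f (m w' v)"
      using w'(2) hom[OF w'(1) v] by simp
    then have "u = m w' v"
      by (rule inj_onD[OF assms(2) _ u quandle_closed[OF assms(1) w'(1) v]])
    with uniq w w'(1) show ?thesis
      by blast
  qed
  show ?thesis
  proof (rule ex1I[of _ "f w"])
    show "f w \<in> f ` Q \<and> f u = n (f w) (f v)"
      using w v hom by simp
  next
    fix x assume "x \<in> f ` Q \<and> f u = n x (f v)"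
    then obtain w' where "w' \<in> Q" "x = f w'" "f u = n (f w') (f v)"
      by blast
    then show "x = f w"
      using w_unique by simp
  qed
qed

lemma is_quandle_image:
  assumes "is_quandle Q m" "inj_on f Q"
    and hom: "\<And>u v. u \<in> Q \<Longrightarrow> v \<in> Q \<Longrightarrow> f (m u v) = n (f u) (f v)"
  shows "is_quandle (f ` Q) n"
  unfolding is_quandle_def
proof (intro conjI)
  note closed = quandle_closed[OF assms(1)]
  show "f ` Q \<noteq> {}"
    using quandle_nonempty[OF assms(1)] by simp
  show "\<forall>x\<in>f ` Q. \<forall>y\<in>f ` Q. n x y \<in> f ` Q"
    using closed by (auto simp flip: hom)
  show "\<forall>x\<in>f ` Q. n x x = x"
    using quandle_idem[OF assms(1)] by (simp flip: hom)
  show "\<forall>x\<in>f ` Q. \<forall>y\<in>f ` Q. \<exists>!w. w \<in> f ` Q \<and> x = n w y"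
    using quandle_hom_right_div_unique[of Q m f n, OF assms] by simp
  show "\<forall>x\<in>f ` Q. \<forall>y\<in>f ` Q. \<forall>z\<in>f ` Q. n (n x y) z = n (n x z) (n y z)"
  proof (intro ballI)
    fix x y z assume "x \<in> f ` Q" "y \<in> f ` Q" "z \<in> f ` Q"
    then obtain u v w where uvw: "u \<in> Q" "v \<in> Q" "w \<in> Q" and xyz: "x = f u" "y = f v" "z = f w"
      by blast
    then have "n (n x y) z = f (m (m u v) w)"
      by (simp add: closed flip: hom)
    also have "\<dots> = f (m (m u w) (m v w))"
      by (simp only: quandle_distrib[OF assms(1) uvw])
    also have "\<dots> = n (n x z) (n y z)"
      using uvw xyz by (simp add: closed flip: hom)
    finally show "n (n x y) z = n (n x z) (n y z)" .
  qed
qed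

lemma quandle_iso_image:
  assumes "is_quandle Q m" "inj_on f Q" and hom: "\<And>u v. u \<in> Q \<Longrightarrow> v \<in> Q \<Longrightarrow> f (m u v) = n (f u) (f v)"
  shows "quandle_iso (f ` Q) n Q m"
proof -
  let ?g = "inv_into Q f"
  have "bij_betw ?g (f ` Q) Q"
    by (rule bij_betw_inv_into[OF inj_on_imp_bij_betw[OF assms(2)]])
  moreover have "?g (n x y) = m (?g x) (?g y)" if x: "x \<in> f ` Q" and y: "y \<in> f ` Q" for x y
  proof -
    obtain u v where "u \<in> Q" "v \<in> Q" "x = f u" "y = f v"
      using x y by blast
    moreover have "m u v \<in> Q"
      using assms(1) \<open>u \<in> Q\<close> \<open>v \<in> Q\<close> by (rule quandle_closed)
    ultimately show ?thesis
      using assms(2) by (simp flip: hom)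
  qed
  ultimately show ?thesis
    unfolding quandle_iso_def by blast
qed

lemma is_quandle_qmul_zero:
  assumes "is_quandle X (qmul m)" "{} \<in> X"
  shows "X = {{}}"
proof -
  have "u = {}" if "u \<in> X" for u
    using quandle_right_div[OF assms(1) that assms(2)] by auto
  with assms(2) show ?thesis
    by blast
qed

lemma quandle_in_even_card:
  assumes "quandle_in Q m X" "p \<in> X" "even (card p)" "a \<in> X"
  shows "even (card a)"
proof -
  have fin: "finite x" if "x \<in> X" for x
    using assms(1) that by (auto simp: quandle_in_def qring_def)
  have "is_quandle X (qmul m)"
    using assms(1) by (simp add: quandle_in_def)
  then obtain w where "w \<in> X" "a = qmul m w p"
    using assms(4,2) by (rule quandle_right_div)
  then show ?thesis
    using odd_card_qmul[OF fin fin, of w p m] assms(2,3) by auto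
qed

definition latin_quandle :: "'a set \<Rightarrow> ('a \<Rightarrow> 'a \<Rightarrow> 'a) \<Rightarrow> bool" where
  "latin_quandle Q m \<longleftrightarrow> is_quandle Q m \<and> (\<forall>u\<in>Q. bij_betw (m u) Q Q)"

lemma latin_fibre_bij:
  assumes bij: "\<And>u. u \<in> w \<Longrightarrow> bij_betw (m u) Q Q" and "q \<in> Q"
  shows "bij_betw fst {p \<in> w \<times> Q. case_prod m p = q} w"
proof -
  let ?S = "{p \<in> w \<times> Q. case_prod m p = q}"
  have "inj_on fst ?S"
  proof (rule inj_onI)
    fix p p' assume "p \<in> ?S" "p' \<in> ?S" and fst_eq: "fst p = fst p'"
    then have u: "fst p \<in> w" and v: "snd p \<in> Q" "snd p' \<in> Q"
      and eq: "m (fst p) (snd p) = m (fst p) (snd p')"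
      by (auto simp: case_prod_beta)
    have "snd p = snd p'"
      by (rule inj_onD[OF bij_betw_imp_inj_on[OF bij[OF u]] eq v])
    with fst_eq show "p = p'"
      by (simp add: prod_eq_iff)
  qed
  moreover have "w \<subseteq> fst ` ?S"
  proof
    fix u assume u: "u \<in> w"
    have "q \<in> m u ` Q"
      using bij_betw_imp_surj_on[OF bij[OF u]] \<open>q \<in> Q\<close> by simp
    then obtain v where "v \<in> Q" "q = m u v"
      by blast
    with u have "(u, v) \<in> ?S"
      by simp
    then show "u \<in> fst ` ?S"
      by (rule rev_image_eqI) simp
  qed
  ultimately show ?thesis
    by (auto simp: bij_betw_def)
qed

lemma qmul_carrier_right:
  assumes "latin_quandle Q m" "w \<subseteq> Q"
  shows "qmul m w Q = (if odd (card w) then Q else {})"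
proof -
  have bij: "bij_betw (m u) Q Q" if "u \<in> w" for u
    using assms that unfolding latin_quandle_def by blast
  have fibre: "card {p \<in> w \<times> Q. case_prod m p = q} = (if q \<in> Q then card w else 0)" for q
  proof (cases "q \<in> Q")
    case True
    then show ?thesis
      using bij_betw_same_card[OF latin_fibre_bij[OF bij]] by simp
  next
    case False
    have "m u v \<in> Q" if "u \<in> w" "v \<in> Q" for u v
      using bij_betwE[OF bij] that by blast
    with False have "{p \<in> w \<times> Q. case_prod m p = q} = {}"
      by auto
    with False show ?thesis
      by (simp only: if_False card.empty)
  qed
  show ?thesis
    unfolding qmul_eq_fibres fibre by auto
qed

lemma qmul_carrier_singleton:
  assumes "is_quandle Q m" "v \<in> Q"
  shows "qmul m Q {v} = Q"
proof -
  have fibre: "card {p \<in> Q \<times> {v}. case_prod m p = q} = (if q \<in> Q then 1 else 0)" for q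
  proof (cases "q \<in> Q")
    case True
    with assms have "\<exists>!u. u \<in> Q \<and> q = m u v"
      by (simp add: quandle_right_div_unique)
    then obtain u where "u \<in> Q" "q = m u v" "\<And>u'. u' \<in> Q \<Longrightarrow> q = m u' v \<Longrightarrow> u' = u"
      by blast
    then have "{p \<in> Q \<times> {v}. case_prod m p = q} = {(u, v)}"
      by auto
    with True show ?thesis
      by simp
  next
    case False
    have "m u v \<in> Q" if "u \<in> Q" for u
      using assms that by (simp add: quandle_closed)
    with False have "{p \<in> Q \<times> {v}. case_prod m p = q} = {}"
      by auto
    with False show ?thesis
      by (simp only: if_False card.empty)
  qed
  show ?thesis
    unfolding qmul_eq_fibres fibre by auto
qed

lemma qmul_complements:
  assumes "latin_quandle Q m" "finite Q" "odd (card Q)" "i \<in> Q" "j \<in> Q"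
  shows "qmul m (Q - {i}) (Q - {j}) = Q - {m i j}"
proof -
  have quandle: "is_quandle Q m"
    using assms(1) by (simp add: latin_quandle_def)
  have "m i j \<in> Q"
    using quandle assms(4,5) by (rule quandle_closed)
  have "qmul m (Q - {i}) (Q - {j}) = qmul m (sym_diff Q {i}) (sym_diff Q {j})"
    by (rule arg_cong2[where f = "qmul m"]) (use assms(4,5) in auto)
  also have "\<dots> = sym_diff (qmul m Q (sym_diff Q {j})) (qmul m {i} (sym_diff Q {j}))"
    using assms(2) by (intro qmul_sym_diff_left) auto
  also have "\<dots> = sym_diff (sym_diff (qmul m Q Q) (qmul m Q {j})) (sym_diff (qmul m {i} Q) (qmul m {i} {j}))"
    using assms(2)
    by (simp only: qmul_sym_diff_right[of Q Q "{j}"] qmul_sym_diff_right[of "{i}" Q "{j}"] finite.intros)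
  also have "\<dots> = sym_diff (sym_diff Q Q) (sym_diff Q {m i j})"
    using assms qmul_carrier_singleton[OF quandle assms(5)] by (simp add: qmul_carrier_right)
  also have "\<dots> = Q - {m i j}"
    using \<open>m i j \<in> Q\<close> by auto
  finally show ?thesis .
qed

lemma inj_on_diff_singleton: "inj_on (\<lambda>q. Q - {q}) Q"
  by (auto simp: inj_on_def)

lemma quandle_iso_complements:
  assumes "latin_quandle Q m" "finite Q" "odd (card Q)"
  shows "quandle_iso ((\<lambda>q. Q - {q}) ` Q) (qmul m) Q m"
  using assms by (intro quandle_iso_image inj_on_diff_singleton)
    (auto simp: latin_quandle_def qmul_complements)

lemma quandle_in_complements:
  assumes "latin_quandle Q m" "finite Q" "odd (card Q)"
  shows "quandle_in Q m ((\<lambda>q. Q - {q}) ` Q)"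
proof -
  have "is_quandle ((\<lambda>q. Q - {q}) ` Q) (qmul m)"
    using assms by (intro is_quandle_image inj_on_diff_singleton)
      (auto simp: latin_quandle_def qmul_complements)
  with assms(2) show ?thesis
    by (auto simp: quandle_in_def qring_def)
qed

lemma quandle_in_singletons:
  assumes "is_quandle Q m"
  shows "quandle_in Q m ((\<lambda>q. {q}) ` Q)"
proof -
  have "is_quandle ((\<lambda>q. {q}) ` Q) (qmul m)"
    using assms by (intro is_quandle_image) (auto simp: inj_on_def)
  then show ?thesis
    by (auto simp: quandle_in_def qring_def)
qed

lemma quandle_in_carrier:
  assumes "latin_quandle Q m" "finite Q" "odd (card Q)"
  shows "quandle_in Q m {Q}"
  using assms by (auto simp: quandle_in_def qring_def qmul_carrier_right intro: is_quandle_singleton)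

definition weight_layer :: "'a set \<Rightarrow> nat \<Rightarrow> 'a set set" where
  "weight_layer Q k = {x. x \<subseteq> Q \<and> card x = k}"

lemma weight_layer_1: "weight_layer Q 1 = (\<lambda>q. {q}) ` Q"
  by (auto simp: weight_layer_def card_1_singleton_iff)

lemma weight_layer_card:
  assumes "finite Q"
  shows "weight_layer Q (card Q) = {Q}"
  using card_subset_eq[OF assms] by (auto simp: weight_layer_def)

lemma weight_layer_card_minus_1:
  assumes "finite Q" "Q \<noteq> {}"
  shows "weight_layer Q (card Q - 1) = (\<lambda>q. Q - {q}) ` Q"
proof (intro equalityI subsetI)
  fix x assume "x \<in> weight_layer Q (card Q - 1)"
  then have x: "x \<subseteq> Q" "card x = card Q - 1"
    by (simp_all add: weight_layer_def)
  moreover have "card Q > 0"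
    using assms by (simp add: card_gt_0_iff)
  ultimately have "card (Q - x) = 1"
    using assms(1) by (simp add: card_Diff_subset finite_subset)
  then obtain q where "Q - x = {q}"
    by (auto simp: card_1_singleton_iff)
  with x(1) have "q \<in> Q" "x = Q - {q}"
    by auto
  then show "x \<in> (\<lambda>q. Q - {q}) ` Q"
    by blast
next
  fix x assume "x \<in> (\<lambda>q. Q - {q}) ` Q"
  with assms(1) show "x \<in> weight_layer Q (card Q - 1)"
    by (auto simp: weight_layer_def)
qed

lemma quandle_in_carrier_member:
  assumes "latin_quandle Q m" "quandle_in Q m X" "Q \<in> X" "{} \<notin> X"
  shows "X = {Q}"
proof -
  have quandle: "is_quandle X (qmul m)" and sub: "\<And>x. x \<in> X \<Longrightarrow> x \<subseteq> Q"
    using assms(2) by (auto simp: quandle_in_def qring_def)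
  have "y = Q" if y: "y \<in> X" for y
  proof -
    obtain w where "w \<in> X" "y = qmul m w Q"
      using quandle_right_div[OF quandle y assms(3)] .
    then have "y = {} \<or> y = Q"
      using qmul_carrier_right[OF assms(1) sub] by simp
    with assms(4) y show ?thesis
      by blast
  qed
  with assms(3) show ?thesis
    by blast
qed

lemma quandle_in_weights_1_2:
  assumes "quandle_in Q m X" and weights: "\<And>x. x \<in> X \<Longrightarrow> card x = 1 \<or> card x = 2"
  shows "X \<subseteq> weight_layer Q 1 \<or> X \<subseteq> weight_layer Q 2"
proof -
  have sub: "x \<subseteq> Q" if "x \<in> X" for x
    using assms(1) that by (auto simp: quandle_in_def qring_def)
  show ?thesis
  proof (cases "\<exists>p\<in>X. even (card p)")
    case True
    then have "even (card x)" if "x \<in> X" for x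
      using quandle_in_even_card[OF assms(1)] that by blast
    with weights sub have "x \<in> weight_layer Q 2" if "x \<in> X" for x
      using that by (force simp: weight_layer_def)
    then show ?thesis
      by blast
  next
    case False
    with weights sub have "x \<in> weight_layer Q 1" if "x \<in> X" for x
      using that by (force simp: weight_layer_def)
    then show ?thesis
      by blast
  qed
qed

lemma quandle_in_latin_card_3_cases:
  assumes "latin_quandle Q m" "card Q = 3" "quandle_in Q m X"
  shows "X = {{}} \<or> (\<exists>k\<in>{1, 2, 3}. X \<subseteq> weight_layer Q k)"
proof -
  have quandle: "is_quandle X (qmul m)" and sub: "\<And>x. x \<in> X \<Longrightarrow> x \<subseteq> Q"
    using assms(3) by (auto simp: quandle_in_def qring_def)
  have "finite Q"
    using assms(2) by (simp add: card_ge_0_finite)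
  consider "{} \<in> X" | "{} \<notin> X" "Q \<in> X" | "{} \<notin> X" "Q \<notin> X"
    by blast
  then show ?thesis
  proof cases
    case 1
    with quandle show ?thesis
      by (simp add: is_quandle_qmul_zero)
  next
    case 2
    then have "X = {Q}"
      using quandle_in_carrier_member[OF assms(1,3)] by blast
    with assms(2) have "X \<subseteq> weight_layer Q 3"
      by (simp add: weight_layer_def)
    then show ?thesis
      by blast
  next
    case 3
    have "card x = 1 \<or> card x = 2" if "x \<in> X" for x
    proof -
      have "x \<subseteq> Q" "x \<noteq> {}" "x \<noteq> Q"
        using sub that 3 by auto
      with \<open>finite Q\<close> have "0 < card x" "card x < card Q"
        by (auto simp: card_gt_0_iff finite_subset psubset_card_mono)
      with assms(2) show ?thesis
        by linarith
    qed
    then show ?thesis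
      using quandle_in_weights_1_2[OF assms(3)] by blast
  qed
qed

lemma mq_eqI:
  assumes cover: "\<And>X. quandle_in Q m X \<Longrightarrow> X = {{}} \<or> (\<exists>M\<in>\<M>. X \<subseteq> M)"
    and quandles: "\<And>M. M \<in> \<M> \<Longrightarrow> quandle_in Q m M"
    and nonzero: "\<And>M. M \<in> \<M> \<Longrightarrow> {} \<notin> M"
    and disjoint: "pairwise disjnt \<M>"
  shows "mq Q m = \<M>"
proof (intro equalityI subsetI)
  fix X assume "X \<in> mq Q m"
  then have X: "quandle_in Q m X" "X \<noteq> {{}}"
    and max: "\<And>Y. quandle_in Q m Y \<Longrightarrow> X \<subseteq> Y \<Longrightarrow> Y = X"
    by (auto simp: mq_def)
  then obtain M where "M \<in> \<M>" "X \<subseteq> M"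
    using cover by blast
  with max quandles show "X \<in> \<M>"
    by metis
next
  fix M assume M: "M \<in> \<M>"
  have "M \<noteq> {}"
    using quandles[OF M] by (auto simp: quandle_in_def dest: quandle_nonempty)
  have "Y = M" if Y: "quandle_in Q m Y" "M \<subseteq> Y" for Y
  proof -
    from cover[OF Y(1)] consider "Y = {{}}" | M' where "M' \<in> \<M>" "Y \<subseteq> M'"
      by blast
    then show ?thesis
    proof cases
      case 1
      with Y(2) \<open>M \<noteq> {}\<close> nonzero[OF M] show ?thesis
        by blast
    next
      case 2
      with Y(2) \<open>M \<noteq> {}\<close> have "\<not> disjnt M M'"
        by (auto simp: disjnt_def)
      with disjoint M \<open>M' \<in> \<M>\<close> have "M' = M"
        by (auto simp: pairwise_def)
      with 2 Y(2) show ?thesis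
        by blast
    qed
  qed
  with M quandles nonzero show "M \<in> mq Q m"
    by (auto simp: mq_def)
qed

theorem mq_latin_card_3:
  assumes "latin_quandle Q m" "card Q = 3"
  shows "mq Q m = weight_layer Q ` {1, 2, 3}"
proof (rule mq_eqI)
  have "finite Q" "Q \<noteq> {}" "odd (card Q)"
    using assms(2) by (auto simp: card_ge_0_finite)
  have "quandle_in Q m (weight_layer Q 1)"
    using assms(1) unfolding weight_layer_1 latin_quandle_def by (blast intro: quandle_in_singletons)
  moreover have "quandle_in Q m (weight_layer Q 2)"
    using weight_layer_card_minus_1[OF \<open>finite Q\<close> \<open>Q \<noteq> {}\<close>] assms
      quandle_in_complements[OF assms(1) \<open>finite Q\<close> \<open>odd (card Q)\<close>] by simp
  moreover have "quandle_in Q m (weight_layer Q 3)"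
    using weight_layer_card[OF \<open>finite Q\<close>] assms
      quandle_in_carrier[OF assms(1) \<open>finite Q\<close> \<open>odd (card Q)\<close>] by simp
  ultimately show "quandle_in Q m M" if "M \<in> weight_layer Q ` {1, 2, 3}" for M
    using that by blast
  show "X = {{}} \<or> (\<exists>M\<in>weight_layer Q ` {1, 2, 3}. X \<subseteq> M)" if "quandle_in Q m X" for X
    using quandle_in_latin_card_3_cases[OF assms that] by blast
  show "{} \<notin> M" if "M \<in> weight_layer Q ` {1, 2, 3}" for M
    using that by (auto simp: weight_layer_def)
  show "pairwise disjnt (weight_layer Q ` {1, 2, 3})"
    by (auto simp: pairwise_def disjnt_def weight_layer_def)
qed

lemma latin_quandle_R3: "latin_quandle R3 r3op"
proof -
  have right_inv: "r3op (r3op u v) v = u" and left_inv: "r3op u (r3op u v) = v"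
    and closed: "r3op u v \<in> R3" if "u \<in> R3" "v \<in> R3" for u v
    using that by (auto simp: R3_def r3op_def)
  have "is_quandle R3 r3op"
    unfolding is_quandle_def
  proof (intro conjI ballI)
    fix u v assume "u \<in> R3" "v \<in> R3"
    with right_inv closed show "\<exists>!w. w \<in> R3 \<and> u = r3op w v"
      by metis
  qed (auto simp: R3_def r3op_def)
  moreover have "bij_betw (r3op u) R3 R3" if "u \<in> R3" for u
    using that left_inv closed by (intro bij_betw_byWitness[where f' = "r3op u"]) auto
  ultimately show ?thesis
    by (simp add: latin_quandle_def)
qed

theorem theorem5p5:
  shows "mq R3 r3op = {{{0, 1, 2}}, {{0}, {1}, {2}}, {{0, 1}, {0, 2}, {1, 2}}}
         \<and> quandle_iso {{0, 1}, {0, 2}, {1, 2}} (qmul r3op) R3 r3op"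
proof -
  have card_R3: "card R3 = 3" and "finite R3" "R3 \<noteq> {}"
    by (simp_all add: R3_def)
  have carrier: "{R3} = {{0, 1, 2}}"
    by (simp add: R3_def)
  have singletons: "(\<lambda>q. {q}) ` R3 = {{0}, {1}, {2}}"
    by (simp add: R3_def)
  have complements: "(\<lambda>q. R3 - {q}) ` R3 = {{0, 1}, {0, 2}, {1, 2}}"
    by (auto simp: R3_def)
  have "weight_layer R3 ` {1, 2, 3} = {{R3}, (\<lambda>q. {q}) ` R3, (\<lambda>q. R3 - {q}) ` R3}"
    using weight_layer_1[of R3] weight_layer_card_minus_1[OF \<open>finite R3\<close> \<open>R3 \<noteq> {}\<close>]
      weight_layer_card[OF \<open>finite R3\<close>] card_R3
    by (simp add: insert_commute)
  then have "mq R3 r3op = {{{0, 1, 2}}, {{0}, {1}, {2}}, {{0, 1}, {0, 2}, {1, 2}}}"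
    unfolding mq_latin_card_3[OF latin_quandle_R3 card_R3] carrier singletons complements .
  moreover have "quandle_iso {{0, 1}, {0, 2}, {1, 2}} (qmul r3op) R3 r3op"
    using quandle_iso_complements[OF latin_quandle_R3 \<open>finite R3\<close>] card_R3
    unfolding complements by simp
  ultimately show ?thesis ..
qed

end
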